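(* Let $\Phi_U$ be a pmf on a finite set $\mathcal U$ and $\Phi_{V|U}$ a channel to a finite set $\mathcal V$, with induced $\Phi_V$. Let $\mathcal B^{(n)}=\{u^n(j)\}_{j=1}^{2^{nR}}$ be a random codebook whose codewords are drawn mutually independently, each i.i.d. according to $\Phi_U$, and let $P_{V^n}(v^n)=2^{-nR}\sum_{j}\prod_{t=1}^n\Phi_{V|U}(v_t|u_t(j))$ be the induced output distribution, with desired distribution $Q_{V^n}=\prod_{t=1}^n\Phi_V(v_t)$. If $R>I_\Phi(U;V)$ then $\lim_{n\to\infty}\mathbf E\|P_{V^n}-Q_{V^n}\|_{TV}=0$, where the expectation is over the random codebook. Moreover, for every $n$, $$\mathbf E\|P_{V^n}-Q_{V^n}\|_{TV}\le \tfrac32\,2^{-\gamma n},$$ where $$\gamma=\max_{\beta\ge0,\beta'\ge0,(\beta,\beta')\neq(0,0)}\frac{1}{2\beta+\beta'}\Big(-\beta'\log\mathbf E_\Phi Z^{\beta}-2\beta\log \mathbf E_{\Phi_V}\sqrt{\mathbf E_{\Phi_{U|V}}Z^{1-\beta'}}\Big),\qquad Z=2^{-R}\frac{\Phi_{U,V}(U,V)}{\Phi_U(U)\Phi_V(V)}.$$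
   Context: Total variation $\|P-Q\|_{TV}=\frac12\sum|P-Q|$. All logarithms are base 2 and $R$ is in bits ($2^{nR}$ treated as an integer). $\mathbf E_\Phi$ is expectation under $\Phi_{U,V}=\Phi_U\Phi_{V|U}$; in $\mathbf E_{\Phi_V}\sqrt{\mathbf E_{\Phi_{U|V}}(\cdot)}$ the inner expectation is over $U$ given $V$ and the outer over $V$. *)

theory Defs
  imports "HOL-Probability.Probability"
begin

definition outdist :: "'u pmf \<Rightarrow> ('u \<Rightarrow> 'v pmf) \<Rightarrow> 'v pmf" where
  "outdist pu W = bind_pmf pu W"

definition joint :: "'u pmf \<Rightarrow> ('u \<Rightarrow> 'v pmf) \<Rightarrow> 'u \<Rightarrow> 'v \<Rightarrow> real" where
  "joint pu W u v = pmf pu u * pmf (W u) v"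

definition cond :: "'u pmf \<Rightarrow> ('u \<Rightarrow> 'v pmf) \<Rightarrow> 'u \<Rightarrow> 'v \<Rightarrow> real" where
  "cond pu W u v = joint pu W u v / pmf (outdist pu W) v"

definition mutual_info :: "'u::finite pmf \<Rightarrow> ('u \<Rightarrow> 'v::finite pmf) \<Rightarrow> real" where
  "mutual_info pu W = (\<Sum>u\<in>UNIV. \<Sum>v\<in>UNIV. joint pu W u v *
      log 2 (joint pu W u v / (pmf pu u * pmf (outdist pu W) v)))"

definition Zval :: "real \<Rightarrow> 'u pmf \<Rightarrow> ('u \<Rightarrow> 'v pmf) \<Rightarrow> 'u \<Rightarrow> 'v \<Rightarrow> real" where
  "Zval R pu W u v = 2 powr (-R) * joint pu W u v / (pmf pu u * pmf (outdist pu W) v)"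

definition gamma_obj :: "real \<Rightarrow> 'u::finite pmf \<Rightarrow> ('u \<Rightarrow> 'v::finite pmf) \<Rightarrow> real \<Rightarrow> real \<Rightarrow> real" where
  "gamma_obj R pu W b b' =
     (1 / (2 * b + b')) *
     ( - b' * log 2 (\<Sum>u\<in>UNIV. \<Sum>v\<in>UNIV. joint pu W u v * Zval R pu W u v powr b)
       - 2 * b * log 2 (\<Sum>v\<in>UNIV. pmf (outdist pu W) v *
             sqrt (\<Sum>u\<in>UNIV. cond pu W u v * Zval R pu W u v powr (1 - b'))))"

definition ncode :: "real \<Rightarrow> nat \<Rightarrow> nat" where
  "ncode R n = nat \<lceil>2 powr (real n * R)\<rceil>"

(* Random codebook: codeword j has letters c (j,t), t < n; all i.i.d. Phi_U *)
definition codebook_pmf :: "'u pmf \<Rightarrow> nat \<Rightarrow> nat \<Rightarrow> (nat \<times> nat \<Rightarrow> 'u) pmf" where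
  "codebook_pmf pu M n = Pi_pmf ({0..<M} \<times> {0..<n}) undefined (\<lambda>_. pu)"

definition Pout :: "('u \<Rightarrow> 'v pmf) \<Rightarrow> nat \<Rightarrow> nat \<Rightarrow> (nat \<times> nat \<Rightarrow> 'u) \<Rightarrow> (nat \<Rightarrow> 'v) \<Rightarrow> real" where
  "Pout W M n c vs = (1 / real M) * (\<Sum>j<M. \<Prod>t<n. pmf (W (c (j, t))) (vs t))"

definition Qout :: "'u pmf \<Rightarrow> ('u \<Rightarrow> 'v pmf) \<Rightarrow> nat \<Rightarrow> (nat \<Rightarrow> 'v) \<Rightarrow> real" where
  "Qout pu W n vs = (\<Prod>t<n. pmf (outdist pu W) (vs t))"

definition tv_seq :: "nat \<Rightarrow> ((nat \<Rightarrow> 'v::finite) \<Rightarrow> real) \<Rightarrow> ((nat \<Rightarrow> 'v) \<Rightarrow> real) \<Rightarrow> real" where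
  "tv_seq n P Q = (1/2) * (\<Sum>vs\<in>PiE {0..<n} (\<lambda>_. UNIV). \<bar>P vs - Q vs\<bar>)"

definition exp_tv :: "real \<Rightarrow> 'u::finite pmf \<Rightarrow> ('u \<Rightarrow> 'v::finite pmf) \<Rightarrow> nat \<Rightarrow> real" where
  "exp_tv R pu W n = measure_pmf.expectation (codebook_pmf pu (ncode R n) n)
       (\<lambda>c. tv_seq n (Pout W (ncode R n) n c) (Qout pu W n))"

end

theory Submission
  imports Defs
begin

(* Idea (Cuff's soft-covering argument with Chernoff-type exponents).  Write the codebook
   as M = ncode R n independent words X_1..X_M, each i.i.d. Phi_U, so that
   P(v^n) = (1/M) sum_j W^n(v^n|X_j) and Q(v^n) = E W^n(v^n|X).  Fix a threshold tau and
   split W^n(v^n|x) according to whether the likelihood ratio L(x,v^n) = prod_t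
   W(v_t|x_t)/Phi_V(v_t) is at most tau ("typical") or not.  The typical part is a sample
   mean of M i.i.d. terms, whose expected deviation is at most sqrt(E[h^2]/M); the
   atypical part contributes at most twice its mean.  Bounding the indicators by powers
   L^(1-b') tau^b' and (L/tau)^b turns both terms into n-th powers of single-letter
   sums, which are exactly the two moments of Z occurring in gamma_obj; choosing tau to
   balance them gives 3/2 * 2^(-gamma n).  Finally, if R > I(U;V) then the derivative
   of b |-> E Z^b at b = 0 is ln 2 (I(U;V) - R) < 0, so some exponent is positive and
   the bound tends to 0. *)


section \<open>A random codebook as a family of independent i.i.d. words\<close>

(* For a finitely supported pmf, E|Z| <= sqrt(E Z^2), since the variance of |Z| is
   nonnegative. *)
lemma expectation_abs_le_sqrt_sq:
  fixes Z :: "'a \<Rightarrow> real"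
  assumes fin: "finite (set_pmf p)"
  shows "measure_pmf.expectation p (\<lambda>x. \<bar>Z x\<bar>) \<le> sqrt (measure_pmf.expectation p (\<lambda>x. (Z x)^2))"
proof -
  have i1: "integrable (measure_pmf p) (\<lambda>x. \<bar>Z x\<bar>)" by (rule integrable_measure_pmf_finite[OF fin])
  have i2: "integrable (measure_pmf p) (\<lambda>x. (\<bar>Z x\<bar>)^2)" by (rule integrable_measure_pmf_finite[OF fin])
  have "measure_pmf.variance p (\<lambda>x. \<bar>Z x\<bar>) = measure_pmf.expectation p (\<lambda>x. (\<bar>Z x\<bar>)^2) - (measure_pmf.expectation p (\<lambda>x. \<bar>Z x\<bar>))^2"
    by (rule measure_pmf.variance_eq[OF i1 i2])
  moreover have "measure_pmf.variance p (\<lambda>x. \<bar>Z x\<bar>) \<ge> 0" by (intro integral_nonneg_AE) auto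
  ultimately have "(measure_pmf.expectation p (\<lambda>x. \<bar>Z x\<bar>))^2 \<le> measure_pmf.expectation p (\<lambda>x. (Z x)^2)"
    by simp
  thus ?thesis by (rule real_le_rsqrt)
qed

definition iid_word :: "'u pmf \<Rightarrow> nat \<Rightarrow> (nat \<Rightarrow> 'u) pmf" where
  "iid_word pu n = Pi_pmf {0..<n} undefined (\<lambda>_. pu)"

definition iid_codebook :: "'u pmf \<Rightarrow> nat \<Rightarrow> nat \<Rightarrow> (nat \<Rightarrow> nat \<Rightarrow> 'u) pmf" where
  "iid_codebook pu M n = Pi_pmf {0..<M} (\<lambda>_. undefined) (\<lambda>_. iid_word pu n)"

lemma finite_iid_word: "finite (set_pmf (iid_word (pu :: 'u::finite pmf) n))"
  unfolding iid_word_def by (subst set_Pi_pmf) auto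

lemma finite_iid_codebook: "finite (set_pmf (iid_codebook (pu :: 'u::finite pmf) M n))"
  unfolding iid_codebook_def by (subst set_Pi_pmf) (auto intro!: finite_PiE_dflt simp: finite_iid_word)

lemma iid_word_letter_pos:
  assumes "x \<in> set_pmf (iid_word pu n)" "t < n"
  shows "pmf pu (x t) > 0"
  using assms unfolding iid_word_def by (subst (asm) set_Pi_pmf) (auto simp: PiE_dflt_def set_pmf_eq')

lemma pmf_iid_codebook_curried:
  "pmf (iid_codebook pu M n) (\<lambda>j t. c (j, t)) = pmf (codebook_pmf pu M n) c"
proof (cases "\<forall>p. p \<notin> {0..<M} \<times> {0..<n} \<longrightarrow> c p = undefined")
  case True
  have "pmf (iid_codebook pu M n) (\<lambda>j t. c (j, t)) = (\<Prod>j\<in>{0..<M}. pmf (iid_word pu n) (\<lambda>t. c (j, t)))"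
    unfolding iid_codebook_def using True by (subst pmf_Pi) (auto simp: fun_eq_iff)
  also have "\<dots> = (\<Prod>j\<in>{0..<M}. \<Prod>t\<in>{0..<n}. pmf pu (c (j, t)))"
    unfolding iid_word_def using True by (intro prod.cong refl, subst pmf_Pi) auto
  also have "\<dots> = (\<Prod>p\<in>{0..<M} \<times> {0..<n}. pmf pu (c p))"
    by (simp add: prod.cartesian_product)
  also have "\<dots> = pmf (codebook_pmf pu M n) c"
    unfolding codebook_pmf_def using True by (subst pmf_Pi) auto
  finally show ?thesis .
next
  case False
  then obtain j t where jt: "(j, t) \<notin> {0..<M} \<times> {0..<n}" "c (j, t) \<noteq> undefined" by auto
  have "pmf (iid_codebook pu M n) (\<lambda>j t. c (j, t)) = 0"
  proof (cases "j < M")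
    case True
    then have "\<not> t < n" using jt by auto
    hence "pmf (iid_word pu n) (\<lambda>t. c (j, t)) = 0"
      unfolding iid_word_def using jt by (subst pmf_Pi) auto
    thus ?thesis unfolding iid_codebook_def using True by (subst pmf_Pi) auto
  next
    case False
    thus ?thesis
      unfolding iid_codebook_def using jt by (subst pmf_Pi) (auto simp: fun_eq_iff intro!: exI[of _ j])
  qed
  moreover have "pmf (codebook_pmf pu M n) c = 0"
    unfolding codebook_pmf_def using False by (subst pmf_Pi) auto
  ultimately show ?thesis by simp
qed

(* Hence the codebook distribution is the curried image of the family of independent
   words; this lets us use independence across codewords. *)
lemma codebook_pmf_as_words:
  "codebook_pmf pu M n = map_pmf (\<lambda>C p. C (fst p) (snd p)) (iid_codebook pu M n)"
proof (rule pmf_eqI)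
  fix c :: "nat \<times> nat \<Rightarrow> 'a"
  define g :: "(nat \<Rightarrow> nat \<Rightarrow> 'a) \<Rightarrow> nat \<times> nat \<Rightarrow> 'a" where "g = (\<lambda>C p. C (fst p) (snd p))"
  have "inj g" unfolding g_def inj_def by (auto simp: fun_eq_iff)
  moreover have "c = g (\<lambda>j t. c (j, t))" by (simp add: g_def)
  ultimately have "pmf (map_pmf g (iid_codebook pu M n)) c = pmf (iid_codebook pu M n) (\<lambda>j t. c (j, t))"
    by (metis pmf_map_inj')
  thus "pmf (codebook_pmf pu M n) c = pmf (map_pmf (\<lambda>C p. C (fst p) (snd p)) (iid_codebook pu M n)) c"
    by (simp add: g_def pmf_iid_codebook_curried)
qed

lemma expectation_codeword:
  fixes f :: "(nat \<Rightarrow> 'u) \<Rightarrow> real"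
  assumes "j < M"
  shows "measure_pmf.expectation (iid_codebook pu M n) (\<lambda>C. f (C j)) = measure_pmf.expectation (iid_word pu n) f"
proof -
  have "map_pmf (\<lambda>C. C j) (iid_codebook pu M n) = iid_word pu n"
    unfolding iid_codebook_def using assms by (subst Pi_pmf_component) auto
  thus ?thesis by (metis integral_map_pmf)
qed

lemma expectation_codeword_pair:
  fixes h :: "(nat \<Rightarrow> 'u::finite) \<Rightarrow> real"
  assumes "j < M" "k < M" "j \<noteq> k" "\<And>x. h x \<ge> 0"
  shows "measure_pmf.expectation (iid_codebook pu M n) (\<lambda>C. h (C j) * h (C k))
       = (measure_pmf.expectation (iid_word pu n) h)^2"
proof -
  define f where "f = (\<lambda>i x. (if i = j then h x else 1) * (if i = k then h x else (1::real)))"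
  have "(\<lambda>C. h (C j) * h (C k)) = (\<lambda>C. \<Prod>i\<in>{0..<M}. f i (C i))"
    unfolding f_def using assms by (auto simp: prod.distrib fun_eq_iff)
  hence "measure_pmf.expectation (iid_codebook pu M n) (\<lambda>C. h (C j) * h (C k))
      = (\<Prod>i\<in>{0..<M}. measure_pmf.expectation (iid_word pu n) (f i))"
    unfolding iid_codebook_def
    by (simp, intro expectation_prod_Pi_pmf)
       (auto simp: f_def assms integrable_measure_pmf_finite finite_iid_word)
  also have "\<dots> = (\<Prod>i\<in>{0..<M}. (if i = j then measure_pmf.expectation (iid_word pu n) h else 1) *
        (if i = k then measure_pmf.expectation (iid_word pu n) h else 1))"
    using assms(3) by (intro prod.cong refl) (auto simp: f_def)
  also have "\<dots> = (measure_pmf.expectation (iid_word pu n) h)^2"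
    using assms by (simp add: prod.distrib power2_eq_square)
  finally show ?thesis .
qed

lemma expectation_sample_mean:
  fixes h :: "(nat \<Rightarrow> 'u::finite) \<Rightarrow> real"
  assumes M: "M \<ge> 1"
  shows "measure_pmf.expectation (iid_codebook pu M n) (\<lambda>C. (1 / real M) * (\<Sum>j<M. h (C j)))
       = measure_pmf.expectation (iid_word pu n) h"
proof -
  have int: "integrable (measure_pmf (iid_codebook pu M n)) f" for f :: "_ \<Rightarrow> real"
    by (rule integrable_measure_pmf_finite[OF finite_iid_codebook])
  have "measure_pmf.expectation (iid_codebook pu M n) (\<lambda>C. (1 / real M) * (\<Sum>j<M. h (C j)))
      = (1 / real M) * (\<Sum>j<M. measure_pmf.expectation (iid_word pu n) h)"
    by (simp add: int Bochner_Integration.integral_sum expectation_codeword)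
  thus ?thesis using M by simp
qed

lemma sample_mean_deviation:
  fixes h :: "(nat \<Rightarrow> 'u::finite) \<Rightarrow> real"
  assumes M: "M \<ge> 1" and h: "\<And>x. h x \<ge> 0"
  shows "measure_pmf.expectation (iid_codebook pu M n)
           (\<lambda>C. \<bar>(1 / real M) * (\<Sum>j<M. h (C j)) - measure_pmf.expectation (iid_word pu n) h\<bar>)
         \<le> sqrt (measure_pmf.expectation (iid_word pu n) (\<lambda>x. (h x)^2) / real M)"
proof -
  define \<mu> where "\<mu> = measure_pmf.expectation (iid_word pu n) h"
  define e2 where "e2 = measure_pmf.expectation (iid_word pu n) (\<lambda>x. (h x)^2)"
  let ?E = "measure_pmf.expectation (iid_codebook pu M n)"
  have int: "integrable (measure_pmf (iid_codebook pu M n)) f" for f :: "_ \<Rightarrow> real"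
    by (rule integrable_measure_pmf_finite[OF finite_iid_codebook])
  have pairs: "?E (\<lambda>C. h (C j) * h (C k)) = \<mu>^2 + (if j = k then e2 - \<mu>^2 else 0)"
    if "j < M" "k < M" for j k
  proof (cases "j = k")
    case True
    then show ?thesis using expectation_codeword[OF that(1), where f="\<lambda>x. h x * h x" and pu=pu and n=n]
      by (simp add: e2_def power2_eq_square)
  next
    case False
    then show ?thesis using expectation_codeword_pair[OF that False h] by (simp add: \<mu>_def)
  qed
  have sq: "(\<lambda>C. ((1 / real M) * (\<Sum>j<M. h (C j)) - \<mu>)^2) =
     (\<lambda>C. (1 / real M)^2 * (\<Sum>j<M. \<Sum>k<M. h (C j) * h (C k)) - 2 * \<mu> * ((1 / real M) * (\<Sum>j<M. h (C j))) + \<mu>^2)"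
    by (auto simp: fun_eq_iff power2_eq_square sum_product algebra_simps)
  have "?E (\<lambda>C. ((1 / real M) * (\<Sum>j<M. h (C j)) - \<mu>)^2) =
     (1 / real M)^2 * (\<Sum>j<M. \<Sum>k<M. ?E (\<lambda>C. h (C j) * h (C k))) - 2 * \<mu> * \<mu> + \<mu>^2"
    unfolding sq using expectation_sample_mean[OF M, where h=h and pu=pu and n=n]
    by (simp add: int Bochner_Integration.integral_sum \<mu>_def) (metis times_divide_eq_right)
  also have "(\<Sum>j<M. \<Sum>k<M. ?E (\<lambda>C. h (C j) * h (C k))) = real M * real M * \<mu>^2 + real M * (e2 - \<mu>^2)"
    by (simp add: pairs sum.distrib algebra_simps)
  finally have "?E (\<lambda>C. ((1 / real M) * (\<Sum>j<M. h (C j)) - \<mu>)^2) = (e2 - \<mu>^2) / real M"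
    using M by (simp add: field_simps power2_eq_square)
  also have "\<dots> \<le> e2 / real M" using M by (simp add: divide_right_mono)
  finally have var: "?E (\<lambda>C. ((1 / real M) * (\<Sum>j<M. h (C j)) - \<mu>)^2) \<le> e2 / real M" .
  have "?E (\<lambda>C. \<bar>(1 / real M) * (\<Sum>j<M. h (C j)) - \<mu>\<bar>) \<le> sqrt (?E (\<lambda>C. ((1 / real M) * (\<Sum>j<M. h (C j)) - \<mu>)^2))"
    by (rule expectation_abs_le_sqrt_sq[OF finite_iid_codebook])
  also have "\<dots> \<le> sqrt (e2 / real M)" using var by simp
  finally show ?thesis by (simp add: \<mu>_def e2_def)
qed

section \<open>Product structure of the channel and of the likelihood ratio\<close>

abbreviation out_seqs :: "nat \<Rightarrow> (nat \<Rightarrow> 'v) set" where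
  "out_seqs n \<equiv> PiE {0..<n} (\<lambda>_. UNIV)"

(* Single-letter likelihood ratio Phi_{U,V}(u,v) / (Phi_U(u) Phi_V(v)); Z = 2^(-R) times it. *)
definition lratio :: "'u pmf \<Rightarrow> ('u \<Rightarrow> 'v pmf) \<Rightarrow> 'u \<Rightarrow> 'v \<Rightarrow> real" where
  "lratio pu W u v = joint pu W u v / (pmf pu u * pmf (outdist pu W) v)"

definition chan_n :: "('u \<Rightarrow> 'v pmf) \<Rightarrow> nat \<Rightarrow> (nat \<Rightarrow> 'u) \<Rightarrow> (nat \<Rightarrow> 'v) \<Rightarrow> real" where
  "chan_n W n x vs = (\<Prod>t<n. pmf (W (x t)) (vs t))"

definition lratio_n :: "'u pmf \<Rightarrow> ('u \<Rightarrow> 'v pmf) \<Rightarrow> nat \<Rightarrow> (nat \<Rightarrow> 'u) \<Rightarrow> (nat \<Rightarrow> 'v) \<Rightarrow> real" where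
  "lratio_n pu W n x vs = (\<Prod>t<n. lratio pu W (x t) (vs t))"

lemma chan_n_nonneg: "chan_n W n x vs \<ge> 0"
  unfolding chan_n_def by (intro prod_nonneg) auto

lemma lratio_nonneg: "lratio pu W u v \<ge> 0"
  unfolding lratio_def joint_def by auto

lemma lratio_n_nonneg: "lratio_n pu W n x vs \<ge> 0"
  unfolding lratio_n_def by (intro prod_nonneg) (auto simp: lratio_nonneg)

lemma pmf_outdist_sum: "pmf (outdist pu W) v = (\<Sum>u\<in>UNIV. pmf pu u * pmf (W u) v)"
  for pu :: "'u::finite pmf"
  unfolding outdist_def pmf_bind by (subst integral_measure_pmf_real[of UNIV]) (auto simp: mult.commute)

lemma joint_le_outdist: "pmf pu u * pmf (W u) v \<le> pmf (outdist pu W) v"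
  for pu :: "'u::finite pmf"
  unfolding pmf_outdist_sum by (rule member_le_sum) auto

(* On the support of pu, W(v|u) = Phi_V(v) * lratio(u,v); hence W^n = Q * L on possible words. *)
lemma chan_eq_outdist_mult_lratio:
  fixes pu :: "'u::finite pmf"
  assumes "pmf pu u > 0"
  shows "pmf (W u) v = pmf (outdist pu W) v * lratio pu W u v"
proof (cases "pmf (outdist pu W) v = 0")
  case True
  hence "pmf pu u * pmf (W u) v \<le> 0" using joint_le_outdist[of pu u W v] by simp
  hence "pmf (W u) v = 0" using assms by (simp add: mult_le_0_iff)
  thus ?thesis using True by simp
next
  case False
  thus ?thesis using assms unfolding lratio_def joint_def by (simp add: field_simps)
qed

lemma expectation_iid_word_prod:
  fixes f :: "nat \<Rightarrow> 'u::finite \<Rightarrow> real"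
  assumes "\<And>t u. f t u \<ge> 0"
  shows "measure_pmf.expectation (iid_word pu n) (\<lambda>x. \<Prod>t<n. f t (x t)) = (\<Prod>t<n. \<Sum>u\<in>UNIV. pmf pu u * f t u)"
proof -
  have "measure_pmf.expectation (iid_word pu n) (\<lambda>x. \<Prod>t\<in>{0..<n}. f t (x t))
      = (\<Prod>t\<in>{0..<n}. measure_pmf.expectation pu (f t))"
    unfolding iid_word_def by (intro expectation_prod_Pi_pmf) (auto simp: assms integrable_measure_pmf_finite)
  also have "\<dots> = (\<Prod>t\<in>{0..<n}. \<Sum>u\<in>UNIV. pmf pu u * f t u)"
    by (intro prod.cong refl, subst integral_measure_pmf_real[of UNIV]) (auto simp: mult.commute)
  finally show ?thesis by (simp add: atLeast0LessThan)
qed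

lemma sum_out_seqs_prod:
  fixes g :: "'v::finite \<Rightarrow> real"
  shows "(\<Sum>vs\<in>out_seqs n. \<Prod>t<n. g (vs t)) = (\<Sum>v\<in>UNIV. g v) ^ n"
proof -
  have "(\<Prod>t<n. \<Sum>v\<in>UNIV. g v) = (\<Sum>vs\<in>out_seqs n. \<Prod>t<n. g (vs t))"
    by (subst prod_sum_PiE) (auto simp: atLeast0LessThan)
  thus ?thesis by simp
qed

lemma Qout_as_expectation:
  fixes pu :: "'u::finite pmf"
  shows "Qout pu W n vs = measure_pmf.expectation (iid_word pu n) (\<lambda>x. chan_n W n x vs)"
  unfolding chan_n_def Qout_def by (subst expectation_iid_word_prod) (auto simp: pmf_outdist_sum)

lemma sqrt_prod: "sqrt (\<Prod>i\<in>A. f i) = (\<Prod>i\<in>A. sqrt (f i))"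
  by (induction A rule: infinite_finite_induct) (auto simp: real_sqrt_mult)


section \<open>Splitting the expected total variation at a typical set\<close>

lemma sample_mean_split:
  fixes f g :: "(nat \<Rightarrow> 'u::finite) \<Rightarrow> real"
  assumes g: "\<And>x. g x \<ge> 0"
  shows "\<bar>(1 / real M) * (\<Sum>j<M. f (C j) + g (C j)) - measure_pmf.expectation (iid_word pu n) (\<lambda>x. f x + g x)\<bar>
       \<le> \<bar>(1 / real M) * (\<Sum>j<M. f (C j)) - measure_pmf.expectation (iid_word pu n) f\<bar>
         + ((1 / real M) * (\<Sum>j<M. g (C j)) + measure_pmf.expectation (iid_word pu n) g)"
proof -
  have "measure_pmf.expectation (iid_word pu n) (\<lambda>x. f x + g x)
      = measure_pmf.expectation (iid_word pu n) f + measure_pmf.expectation (iid_word pu n) g"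
    by (simp add: integrable_measure_pmf_finite[OF finite_iid_word])
  moreover have "(1 / real M) * (\<Sum>j<M. f (C j) + g (C j))
      = (1 / real M) * (\<Sum>j<M. f (C j)) + (1 / real M) * (\<Sum>j<M. g (C j))"
    by (simp add: sum.distrib distrib_left)
  moreover have "(1 / real M) * (\<Sum>j<M. g (C j)) \<ge> 0" by (intro mult_nonneg_nonneg sum_nonneg g) auto
  moreover have "measure_pmf.expectation (iid_word pu n) g \<ge> 0" by (intro integral_nonneg_AE) (auto simp: g)
  ultimately show ?thesis by linarith
qed

lemma expected_tv_split:
  fixes pu :: "'u::finite pmf" and W :: "'u \<Rightarrow> 'v::finite pmf"
    and S :: "(nat \<Rightarrow> 'u) \<Rightarrow> (nat \<Rightarrow> 'v) \<Rightarrow> bool"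
  assumes M: "M \<ge> 1"
  shows "measure_pmf.expectation (codebook_pmf pu M n) (\<lambda>c. tv_seq n (Pout W M n c) (Qout pu W n))
       \<le> 1/2 * (\<Sum>vs\<in>out_seqs n. sqrt (measure_pmf.expectation (iid_word pu n)
                 (\<lambda>x. (chan_n W n x vs * (if S x vs then 1 else 0))^2) / real M))
         + (\<Sum>vs\<in>out_seqs n. measure_pmf.expectation (iid_word pu n)
                 (\<lambda>x. chan_n W n x vs * (if S x vs then 0 else 1)))"
proof -
  define h1 where "h1 = (\<lambda>vs x. chan_n W n x vs * (if S x vs then 1 else (0::real)))"
  define h2 where "h2 = (\<lambda>vs x. chan_n W n x vs * (if S x vs then 0 else (1::real)))"
  define \<mu>1 where "\<mu>1 = (\<lambda>vs. measure_pmf.expectation (iid_word pu n) (h1 vs))"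
  define \<mu>2 where "\<mu>2 = (\<lambda>vs. measure_pmf.expectation (iid_word pu n) (h2 vs))"
  let ?E = "measure_pmf.expectation (iid_codebook pu M n)"
  let ?dev = "\<lambda>C vs. \<bar>(1 / real M) * (\<Sum>j<M. h1 vs (C j)) - \<mu>1 vs\<bar> + ((1 / real M) * (\<Sum>j<M. h2 vs (C j)) + \<mu>2 vs)"
  have int: "integrable (measure_pmf (iid_codebook pu M n)) f" for f :: "_ \<Rightarrow> real"
    by (rule integrable_measure_pmf_finite[OF finite_iid_codebook])
  have h1nn: "h1 vs x \<ge> 0" and h2nn: "h2 vs x \<ge> 0" for vs x
    unfolding h1_def h2_def using chan_n_nonneg[of W n x vs] by simp_all
  have chan: "chan_n W n x vs = h1 vs x + h2 vs x" for x vs by (simp add: h1_def h2_def)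
  have pw: "\<bar>Pout W M n (\<lambda>p. C (fst p) (snd p)) vs - Qout pu W n vs\<bar> \<le> ?dev C vs" for C vs
    unfolding Qout_as_expectation \<mu>1_def \<mu>2_def
    using sample_mean_split[where f="h1 vs" and g="h2 vs" and M=M and C=C and pu=pu and n=n, OF h2nn]
    by (simp add: Pout_def chan_n_def[symmetric] chan)
  have "measure_pmf.expectation (codebook_pmf pu M n) (\<lambda>c. tv_seq n (Pout W M n c) (Qout pu W n))
      = ?E (\<lambda>C. tv_seq n (Pout W M n (\<lambda>p. C (fst p) (snd p))) (Qout pu W n))"
    unfolding codebook_pmf_as_words by (simp add: integral_map_pmf)
  also have "\<dots> \<le> ?E (\<lambda>C. 1/2 * (\<Sum>vs\<in>out_seqs n. ?dev C vs))"
    unfolding tv_seq_def by (intro integral_mono int mult_left_mono sum_mono pw) auto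
  also have "\<dots> = 1/2 * (\<Sum>vs\<in>out_seqs n. ?E (\<lambda>C. \<bar>(1 / real M) * (\<Sum>j<M. h1 vs (C j)) - \<mu>1 vs\<bar>))
      + (\<Sum>vs\<in>out_seqs n. \<mu>2 vs)"
    using expectation_sample_mean[OF M, where pu=pu and n=n]
    by (simp add: int Bochner_Integration.integral_sum sum.distrib algebra_simps sum_distrib_right \<mu>2_def)
  also have "\<dots> \<le> 1/2 * (\<Sum>vs\<in>out_seqs n. sqrt (measure_pmf.expectation (iid_word pu n) (\<lambda>x. (h1 vs x)^2) / real M))
      + (\<Sum>vs\<in>out_seqs n. \<mu>2 vs)"
    unfolding \<mu>1_def using M by (intro add_right_mono mult_left_mono sum_mono sample_mean_deviation h1nn) auto
  finally show ?thesis unfolding h1_def h2_def \<mu>2_def .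
qed

section \<open>The two moments of Z in single-letter form\<close>

definition Z_moment :: "real \<Rightarrow> 'u::finite pmf \<Rightarrow> ('u \<Rightarrow> 'v::finite pmf) \<Rightarrow> real \<Rightarrow> real" where
  "Z_moment R pu W b = (\<Sum>u\<in>UNIV. \<Sum>v\<in>UNIV. joint pu W u v * Zval R pu W u v powr b)"

definition Z_cond_moment :: "real \<Rightarrow> 'u::finite pmf \<Rightarrow> ('u \<Rightarrow> 'v::finite pmf) \<Rightarrow> real \<Rightarrow> real" where
  "Z_cond_moment R pu W b' = (\<Sum>v\<in>UNIV. pmf (outdist pu W) v *
      sqrt (\<Sum>u\<in>UNIV. cond pu W u v * Zval R pu W u v powr (1 - b')))"

lemma gamma_obj_eq:
  "gamma_obj R pu W b b' =
     (- b' * log 2 (Z_moment R pu W b) - 2 * b * log 2 (Z_cond_moment R pu W b')) / (2 * b + b')"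
  unfolding gamma_obj_def Z_moment_def Z_cond_moment_def by simp

lemma Zval_powr: "Zval R pu W u v powr p = 2 powr (- R * p) * lratio pu W u v powr p"
proof -
  have "Zval R pu W u v = 2 powr (- R) * lratio pu W u v" unfolding Zval_def lratio_def by simp
  thus ?thesis by (simp add: powr_mult lratio_nonneg powr_powr)
qed

(* The single-letter sum arising from the atypical part is 2^(R b) E Z^b. *)
lemma Z_moment_eq:
  fixes pu :: "'u::finite pmf" and W :: "'u \<Rightarrow> 'v::finite pmf"
  shows "(\<Sum>v\<in>UNIV. \<Sum>u\<in>UNIV. pmf pu u * (pmf (W u) v * lratio pu W u v powr b)) =
     2 powr (R * b) * Z_moment R pu W b"
proof -
  have e: "joint pu W u v * Zval R pu W u v powr b
      = 2 powr (- R * b) * (pmf pu u * (pmf (W u) v * lratio pu W u v powr b))" for u v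
    unfolding Zval_powr joint_def by (simp only: mult_ac)
  have "Z_moment R pu W b
      = 2 powr (- R * b) * (\<Sum>u\<in>UNIV. \<Sum>v\<in>UNIV. pmf pu u * (pmf (W u) v * lratio pu W u v powr b))"
    unfolding Z_moment_def e by (simp only: sum_distrib_left)
  hence "2 powr (R * b) * Z_moment R pu W b
      = (\<Sum>u\<in>UNIV. \<Sum>v\<in>UNIV. pmf pu u * (pmf (W u) v * lratio pu W u v powr b))"
    by (simp add: mult.assoc[symmetric] powr_add[symmetric])
  thus ?thesis by (subst sum.swap) simp
qed

(* The single-letter sum arising from the typical part is 2^(R(1-b')/2) times the
   conditional moment; pointwise in v, sqrt(q S) = 2^(R p/2) q sqrt(2^(-R p) S/q). *)
lemma Z_cond_moment_eq:
  fixes pu :: "'u::finite pmf" and W :: "'u \<Rightarrow> 'v::finite pmf"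
  shows "(\<Sum>v\<in>UNIV. sqrt (pmf (outdist pu W) v *
             (\<Sum>u\<in>UNIV. pmf pu u * (pmf (W u) v * lratio pu W u v powr (1 - b'))))) =
     2 powr (R * (1 - b') / 2) * Z_cond_moment R pu W b'"
proof -
  define p where "p = 1 - b'"
  have pointwise: "sqrt (pmf (outdist pu W) v * (\<Sum>u\<in>UNIV. pmf pu u * (pmf (W u) v * lratio pu W u v powr p))) =
     2 powr (R * p / 2) * (pmf (outdist pu W) v * sqrt (\<Sum>u\<in>UNIV. cond pu W u v * Zval R pu W u v powr p))" for v
  proof -
    define q where "q = pmf (outdist pu W) v"
    define S where "S = (\<Sum>u\<in>UNIV. pmf pu u * (pmf (W u) v * lratio pu W u v powr p))"
    define T where "T = (\<Sum>u\<in>UNIV. cond pu W u v * Zval R pu W u v powr p)"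
    have "sqrt (q * S) = 2 powr (R * p / 2) * (q * sqrt T)"
    proof (cases "q = 0")
      case False
      hence qp: "q > 0" unfolding q_def using pmf_nonneg[of "outdist pu W" v] by linarith
      have T: "T = 2 powr (- R * p) * (S / q)"
        unfolding T_def S_def q_def cond_def joint_def
        by (simp only: sum_distrib_left sum_divide_distrib Zval_powr, intro sum.cong refl) (simp add: field_simps)
      have c: "2 powr (R * p / 2) * sqrt (2 powr (- R * p)) = 1"
        by (simp add: powr_half_sqrt[symmetric] powr_powr powr_add[symmetric])
      have d: "q * sqrt (S / q) = sqrt (q * S)"
      proof -
        have "q * sqrt (S / q) = sqrt (q^2) * sqrt (S / q)" using qp by simp
        also have "\<dots> = sqrt (q^2 * (S / q))" by (simp only: real_sqrt_mult)
        also have "\<dots> = sqrt (q * S)" using qp by (simp add: power2_eq_square)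
        finally show ?thesis .
      qed
      have "2 powr (R * p / 2) * (q * sqrt T) = (2 powr (R * p / 2) * sqrt (2 powr (- R * p))) * (q * sqrt (S / q))"
        unfolding T real_sqrt_mult by (simp only: mult_ac)
      thus ?thesis unfolding c d by simp
    qed simp
    thus ?thesis unfolding q_def S_def T_def .
  qed
  show ?thesis unfolding Z_cond_moment_def p_def[symmetric] pointwise by (simp only: sum_distrib_left)
qed


section \<open>Chernoff-type bounds for the typical and atypical parts\<close>

(* Markov-type bound on the indicator of an atypical value L > tau. *)
lemma indicator_gt_le_powr:
  fixes L \<tau> \<beta> :: real
  assumes "L \<ge> 0" "\<tau> > 0" "\<beta> \<ge> 0"
  shows "(if L \<le> \<tau> then 0 else 1) \<le> L powr \<beta> / \<tau> powr \<beta>"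
proof (cases "L \<le> \<tau>")
  case False
  hence "\<tau> powr \<beta> \<le> L powr \<beta>" using assms by (intro powr_mono2) auto
  moreover have "\<tau> powr \<beta> > 0" using assms by simp
  ultimately show ?thesis using False by (simp add: field_simps)
qed simp

(* On the typical set L <= tau one may trade a factor L^b' for tau^b'. *)
lemma mult_indicator_le_le_powr:
  fixes L \<tau> \<beta> :: real
  assumes "L \<ge> 0" "\<tau> > 0" "\<beta> \<ge> 0"
  shows "L * (if L \<le> \<tau> then 1 else 0) \<le> L powr (1 - \<beta>) * \<tau> powr \<beta>"
proof (cases "L \<le> \<tau> \<and> L > 0")
  case True
  have "L = L powr (1 - \<beta>) * L powr \<beta>" using True by (simp add: powr_add[symmetric])
  also have "\<dots> \<le> L powr (1 - \<beta>) * \<tau> powr \<beta>"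
    using True assms by (intro mult_left_mono powr_mono2) auto
  finally show ?thesis using True by simp
qed (use assms in auto)

lemma atypical_mass_bound:
  fixes pu :: "'u::finite pmf" and W :: "'u \<Rightarrow> 'v::finite pmf"
  assumes tau: "\<tau> > 0" and b: "b \<ge> 0"
  shows "(\<Sum>vs\<in>out_seqs n. measure_pmf.expectation (iid_word pu n)
            (\<lambda>x. chan_n W n x vs * (if lratio_n pu W n x vs \<le> \<tau> then 0 else 1)))
        \<le> (2 powr (R * b) * Z_moment R pu W b) ^ n / \<tau> powr b"
proof -
  have intX: "integrable (measure_pmf (iid_word pu n)) f" for f :: "_ \<Rightarrow> real"
    by (rule integrable_measure_pmf_finite[OF finite_iid_word])
  have "(\<Sum>vs\<in>out_seqs n. measure_pmf.expectation (iid_word pu n)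
            (\<lambda>x. chan_n W n x vs * (if lratio_n pu W n x vs \<le> \<tau> then 0 else 1)))
     \<le> (\<Sum>vs\<in>out_seqs n. measure_pmf.expectation (iid_word pu n)
            (\<lambda>x. chan_n W n x vs * (lratio_n pu W n x vs powr b / \<tau> powr b)))"
    by (intro sum_mono integral_mono intX mult_left_mono indicator_gt_le_powr
        lratio_n_nonneg chan_n_nonneg tau b)
  also have "\<dots> = (\<Sum>vs\<in>out_seqs n. measure_pmf.expectation (iid_word pu n)
            (\<lambda>x. \<Prod>t<n. pmf (W (x t)) (vs t) * lratio pu W (x t) (vs t) powr b)) / \<tau> powr b"
    unfolding sum_divide_distrib
    by (intro sum.cong refl) (simp add: chan_n_def lratio_n_def prod_powr_distrib lratio_nonneg prod.distrib)
  also have "\<dots> = (\<Sum>vs\<in>out_seqs n. \<Prod>t<n.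
        (\<Sum>u\<in>UNIV. pmf pu u * (pmf (W u) (vs t) * lratio pu W u (vs t) powr b))) / \<tau> powr b"
    by (intro arg_cong[where f="\<lambda>x. x / _"] sum.cong refl expectation_iid_word_prod) auto
  also have "\<dots> = (2 powr (R * b) * Z_moment R pu W b) ^ n / \<tau> powr b"
    by (simp only: sum_out_seqs_prod[where g="\<lambda>v. \<Sum>u\<in>UNIV. pmf pu u * (pmf (W u) v * lratio pu W u v powr b)"]
        Z_moment_eq[where R=R])
  finally show ?thesis .
qed

(* Pointwise bound on the squared typical part: on possible words W^n = Q L, so
   (W^n 1{L <= tau})^2 <= tau^b' Q prod_t W(v_t|x_t) lratio(x_t,v_t)^(1-b'). *)
lemma typical_square_bound:
  fixes pu :: "'u::finite pmf"
  assumes x: "x \<in> set_pmf (iid_word pu n)" and tau: "\<tau> > 0" and b': "b' \<ge> 0"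
  shows "(chan_n W n x vs * (if lratio_n pu W n x vs \<le> \<tau> then 1 else 0))^2 \<le>
      \<tau> powr b' * Qout pu W n vs * (\<Prod>t<n. pmf (W (x t)) (vs t) * lratio pu W (x t) (vs t) powr (1 - b'))"
proof -
  let ?L = "lratio_n pu W n x vs"
  have "chan_n W n x vs = (\<Prod>t<n. pmf (outdist pu W) (vs t) * lratio pu W (x t) (vs t))"
    unfolding chan_n_def by (intro prod.cong refl chan_eq_outdist_mult_lratio iid_word_letter_pos[OF x]) auto
  hence WQ: "chan_n W n x vs = Qout pu W n vs * ?L"
    by (simp add: Qout_def lratio_n_def prod.distrib)
  have Qnn: "Qout pu W n vs \<ge> 0" unfolding Qout_def by (intro prod_nonneg) auto
  have typical_eq: "chan_n W n x vs * (if ?L \<le> \<tau> then 1 else 0) = Qout pu W n vs * (?L * (if ?L \<le> \<tau> then 1 else 0))"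
    unfolding WQ by simp
  have "(chan_n W n x vs * (if ?L \<le> \<tau> then 1 else 0))^2
      = chan_n W n x vs * (chan_n W n x vs * (if ?L \<le> \<tau> then 1 else 0))"
    by (simp add: power2_eq_square)
  also have "\<dots> = chan_n W n x vs * (Qout pu W n vs * (?L * (if ?L \<le> \<tau> then 1 else 0)))"
    by (simp only: typical_eq)
  also have "\<dots> \<le> chan_n W n x vs * (Qout pu W n vs * (?L powr (1 - b') * \<tau> powr b'))"
    by (intro mult_left_mono mult_indicator_le_le_powr lratio_n_nonneg tau b' chan_n_nonneg Qnn)
  also have "\<dots> = \<tau> powr b' * Qout pu W n vs * (\<Prod>t<n. pmf (W (x t)) (vs t) * lratio pu W (x t) (vs t) powr (1 - b'))"
    by (simp add: chan_n_def lratio_n_def prod_powr_distrib lratio_nonneg prod.distrib)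
  finally show ?thesis .
qed

lemma typical_deviation_bound:
  fixes pu :: "'u::finite pmf" and W :: "'u \<Rightarrow> 'v::finite pmf"
  assumes tau: "\<tau> > 0" and b': "b' \<ge> 0" and M: "M > 0"
  shows "(\<Sum>vs\<in>out_seqs n. sqrt (measure_pmf.expectation (iid_word pu n)
            (\<lambda>x. (chan_n W n x vs * (if lratio_n pu W n x vs \<le> \<tau> then 1 else 0))^2) / M))
        \<le> sqrt (\<tau> powr b' / M) * (2 powr (R * (1 - b') / 2) * Z_cond_moment R pu W b') ^ n"
proof -
  define G where "G = (\<lambda>v. \<Sum>u\<in>UNIV. pmf pu u * (pmf (W u) v * lratio pu W u v powr (1 - b')))"
  have intX: "integrable (measure_pmf (iid_word pu n)) f" for f :: "_ \<Rightarrow> real"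
    by (rule integrable_measure_pmf_finite[OF finite_iid_word])
  have mean: "measure_pmf.expectation (iid_word pu n) (\<lambda>x. \<tau> powr b' * Qout pu W n vs *
        (\<Prod>t<n. pmf (W (x t)) (vs t) * lratio pu W (x t) (vs t) powr (1 - b')))
      = \<tau> powr b' * (\<Prod>t<n. pmf (outdist pu W) (vs t) * G (vs t))" for vs
    by (subst integral_mult_right_zero, subst expectation_iid_word_prod)
       (auto simp: G_def Qout_def prod.distrib)
  have "(\<Sum>vs\<in>out_seqs n. sqrt (measure_pmf.expectation (iid_word pu n)
            (\<lambda>x. (chan_n W n x vs * (if lratio_n pu W n x vs \<le> \<tau> then 1 else 0))^2) / M))
      \<le> (\<Sum>vs\<in>out_seqs n. sqrt (\<tau> powr b' * (\<Prod>t<n. pmf (outdist pu W) (vs t) * G (vs t)) / M))"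
    unfolding mean[symmetric] using M
    by (intro sum_mono real_sqrt_le_mono divide_right_mono integral_mono_AE intX AE_pmfI
        typical_square_bound tau b') auto
  also have "\<dots> = (\<Sum>vs\<in>out_seqs n. sqrt (\<tau> powr b' / M) * (\<Prod>t<n. sqrt (pmf (outdist pu W) (vs t) * G (vs t))))"
    by (intro sum.cong refl) (simp add: real_sqrt_mult sqrt_prod real_sqrt_divide)
  also have "\<dots> = sqrt (\<tau> powr b' / M) * (\<Sum>v\<in>UNIV. sqrt (pmf (outdist pu W) v * G v)) ^ n"
    unfolding sum_distrib_left[symmetric] sum_out_seqs_prod[where g="\<lambda>v. sqrt (pmf (outdist pu W) v * G v)"] ..
  also have "\<dots> = sqrt (\<tau> powr b' / M) * (2 powr (R * (1 - b') / 2) * Z_cond_moment R pu W b') ^ n"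
    unfolding G_def Z_cond_moment_eq[where R=R] ..
  finally show ?thesis .
qed

section \<open>The exponential bound\<close>

lemma exists_joint_pos:
  obtains u v where "pmf pu u > 0" "pmf (W u) v > 0"
proof -
  obtain u where u: "u \<in> set_pmf pu" using set_pmf_not_empty by fastforce
  obtain v where v: "v \<in> set_pmf (W u)" using set_pmf_not_empty by fastforce
  show ?thesis using that[of u v] u v by (simp add: pmf_positive)
qed

(* Both moments are positive, so their logarithms in gamma_obj are meaningful. *)
lemma Z_moment_pos: "Z_moment R pu W b > 0"
  for pu :: "'u::finite pmf" and W :: "'u \<Rightarrow> 'v::finite pmf"
proof -
  obtain u v where uv: "pmf pu u > 0" "pmf (W u) v > 0" by (rule exists_joint_pos)
  have q: "pmf (outdist pu W) v > 0"
    using joint_le_outdist[of pu u W v] uv by (meson less_le_trans mult_pos_pos)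
  have Z: "Zval R pu W u v > 0" unfolding Zval_def joint_def using uv q by simp
  have nn: "0 \<le> joint pu W u' v' * Zval R pu W u' v' powr b" for u' v'
    unfolding joint_def by simp
  have "0 < (\<Sum>v\<in>UNIV. joint pu W u v * Zval R pu W u v powr b)"
    by (rule sum_pos2[of _ v]) (use uv Z nn in \<open>auto simp: joint_def\<close>)
  thus ?thesis unfolding Z_moment_def by (intro sum_pos2[of _ u]) (auto intro!: sum_nonneg nn)
qed

lemma Z_cond_moment_pos: "Z_cond_moment R pu W b' > 0"
  for pu :: "'u::finite pmf" and W :: "'u \<Rightarrow> 'v::finite pmf"
proof -
  obtain u v where uv: "pmf pu u > 0" "pmf (W u) v > 0" by (rule exists_joint_pos)
  have q: "pmf (outdist pu W) v > 0"
    using joint_le_outdist[of pu u W v] uv by (meson less_le_trans mult_pos_pos)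
  have Z: "Zval R pu W u v > 0" unfolding Zval_def joint_def using uv q by simp
  have nn: "0 \<le> cond pu W u' v' * Zval R pu W u' v' powr (1 - b')" for u' v'
    unfolding cond_def joint_def by simp
  have "0 < (\<Sum>u\<in>UNIV. cond pu W u v * Zval R pu W u v powr (1 - b'))"
    by (rule sum_pos2[of _ u]) (use uv Z q nn in \<open>auto simp: cond_def joint_def\<close>)
  hence "0 < pmf (outdist pu W) v * sqrt (\<Sum>u\<in>UNIV. cond pu W u v * Zval R pu W u v powr (1 - b'))"
    using q by simp
  thus ?thesis unfolding Z_cond_moment_def
    by (intro sum_pos2[of _ v]) (auto intro!: sum_nonneg nn mult_nonneg_nonneg)
qed

lemma ncode_ge: "real (ncode R n) \<ge> 2 powr (real n * R)"
  unfolding ncode_def by linarith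

lemma ncode_pos: "ncode R n \<ge> 1"
proof -
  have "2 powr (real n * R) > 0" by simp
  hence "\<lceil>2 powr (real n * R)\<rceil> \<ge> 1" by linarith
  thus ?thesis unfolding ncode_def by linarith
qed

lemma exp_tv_threshold_bound:
  fixes pu :: "'u::finite pmf" and W :: "'u \<Rightarrow> 'v::finite pmf"
  assumes tau: "\<tau> > 0" and b: "b \<ge> 0" and b': "b' \<ge> 0"
  shows "exp_tv R pu W n \<le>
     1/2 * (sqrt (\<tau> powr b' / 2 powr (real n * R)) * (2 powr (R * (1 - b') / 2) * Z_cond_moment R pu W b') ^ n)
     + (2 powr (R * b) * Z_moment R pu W b) ^ n / \<tau> powr b"
proof -
  define M where "M = ncode R n"
  have M: "M \<ge> 1" and Mge: "real M \<ge> 2 powr (real n * R)"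
    unfolding M_def by (rule ncode_pos, rule ncode_ge)
  have "exp_tv R pu W n \<le>
     1/2 * (\<Sum>vs\<in>out_seqs n. sqrt (measure_pmf.expectation (iid_word pu n)
                 (\<lambda>x. (chan_n W n x vs * (if lratio_n pu W n x vs \<le> \<tau> then 1 else 0))^2) / real M))
     + (\<Sum>vs\<in>out_seqs n. measure_pmf.expectation (iid_word pu n)
                 (\<lambda>x. chan_n W n x vs * (if lratio_n pu W n x vs \<le> \<tau> then 0 else 1)))"
    unfolding exp_tv_def M_def[symmetric] by (rule expected_tv_split[OF M])
  also have "\<dots> \<le>
     1/2 * (sqrt (\<tau> powr b' / real M) * (2 powr (R * (1 - b') / 2) * Z_cond_moment R pu W b') ^ n)
     + (2 powr (R * b) * Z_moment R pu W b) ^ n / \<tau> powr b"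
    using M by (intro add_mono mult_left_mono typical_deviation_bound atypical_mass_bound tau b b') auto
  also have "\<dots> \<le> 1/2 * (sqrt (\<tau> powr b' / 2 powr (real n * R)) * (2 powr (R * (1 - b') / 2) * Z_cond_moment R pu W b') ^ n)
     + (2 powr (R * b) * Z_moment R pu W b) ^ n / \<tau> powr b"
    using Mge M tau Z_cond_moment_pos[of R pu W b']
    by (intro add_right_mono mult_left_mono mult_right_mono real_sqrt_le_mono divide_left_mono) auto
  finally show ?thesis .
qed

lemma pow_powr2: "(2 powr x) ^ n = (2::real) powr (real n * x)"
  by (simp add: powr_realpow[symmetric] powr_powr mult.commute)

(* The choice of tau that balances both terms: each becomes 2^(-g n), where g is the
   objective of gamma evaluated at (b, b'), written with A = E Z^b and
   B = E_V sqrt(E_{U|V} Z^(1-b')). *)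
lemma threshold_balance:
  fixes A B R b b' :: real and n :: nat
  assumes A: "A > 0" and B: "B > 0" and D: "2 * b + b' > 0"
  defines "g \<equiv> (- b' * log 2 A - 2 * b * log 2 B) / (2 * b + b')"
    and "\<tau> \<equiv> 2 powr (real n * R + 2 * real n * (log 2 A - log 2 B) / (2 * b + b'))"
  shows "sqrt (\<tau> powr b' / 2 powr (real n * R)) * (2 powr (R * (1 - b') / 2) * B) ^ n = 2 powr (- g * real n)"
    and "(2 powr (R * b) * A) ^ n / \<tau> powr b = 2 powr (- g * real n)"
proof -
  define a where "a = log 2 A"
  define c where "c = log 2 B"
  define \<sigma> where "\<sigma> = 2 * real n * (a - c) / (2 * b + b')"
  have Aa: "A = 2 powr a" and Bc: "B = 2 powr c" using A B by (simp_all add: a_def c_def)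
  have tau: "\<tau> = 2 powr (real n * R + \<sigma>)" unfolding \<tau>_def \<sigma>_def a_def c_def ..
  have g: "g = (- b' * a - 2 * b * c) / (2 * b + b')" unfolding g_def a_def c_def ..
  have "sqrt (\<tau> powr b' / 2 powr (real n * R)) = 2 powr (((real n * R + \<sigma>) * b' - real n * R) / 2)"
    unfolding tau by (simp add: powr_powr powr_diff powr_half_sqrt_powr)
  moreover have "(2 powr (R * (1 - b') / 2) * B) ^ n = 2 powr (real n * (R * (1 - b') / 2 + c))"
    unfolding Bc by (simp add: powr_add[symmetric] pow_powr2)
  moreover have "((real n * R + \<sigma>) * b' - real n * R) / 2 + real n * (R * (1 - b') / 2 + c) = - g * real n"
    unfolding g \<sigma>_def using D by (simp add: field_simps)
  ultimately show "sqrt (\<tau> powr b' / 2 powr (real n * R)) * (2 powr (R * (1 - b') / 2) * B) ^ n = 2 powr (- g * real n)"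
    by (simp add: powr_add[symmetric])
  have "(2 powr (R * b) * A) ^ n / \<tau> powr b = 2 powr (real n * (R * b + a) - (real n * R + \<sigma>) * b)"
    unfolding Aa tau by (simp add: powr_add[symmetric] pow_powr2 powr_powr powr_diff)
  also have "real n * (R * b + a) - (real n * R + \<sigma>) * b = - g * real n"
    unfolding g \<sigma>_def using D by (simp add: field_simps)
  finally show "(2 powr (R * b) * A) ^ n / \<tau> powr b = 2 powr (- g * real n)" .
qed

lemma exp_tv_exponential_bound:
  fixes pu :: "'u::finite pmf" and W :: "'u \<Rightarrow> 'v::finite pmf"
  assumes b: "b \<ge> 0" and b': "b' \<ge> 0" and nz: "(b, b') \<noteq> (0, 0)"
  shows "exp_tv R pu W n \<le> 3/2 * 2 powr (- gamma_obj R pu W b b' * real n)"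
proof -
  define A where "A = Z_moment R pu W b"
  define B where "B = Z_cond_moment R pu W b'"
  have D: "2 * b + b' > 0" using b b' nz by (cases "b = 0") auto
  define \<tau> :: real where "\<tau> = 2 powr (real n * R + 2 * real n * (log 2 A - log 2 B) / (2 * b + b'))"
  have g: "gamma_obj R pu W b b' = (- b' * log 2 A - 2 * b * log 2 B) / (2 * b + b')"
    unfolding gamma_obj_eq A_def B_def ..
  have "exp_tv R pu W n \<le> 1/2 * (sqrt (\<tau> powr b' / 2 powr (real n * R)) * (2 powr (R * (1 - b') / 2) * B) ^ n)
       + (2 powr (R * b) * A) ^ n / \<tau> powr b"
    unfolding A_def B_def by (rule exp_tv_threshold_bound) (use b b' in \<open>auto simp: \<tau>_def\<close>)
  also have "\<dots> = 1/2 * 2 powr (- gamma_obj R pu W b b' * real n) + 2 powr (- gamma_obj R pu W b b' * real n)"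
  proof -
    have "A > 0" "B > 0" unfolding A_def B_def by (rule Z_moment_pos, rule Z_cond_moment_pos)
    note balance = threshold_balance[OF this D, where n=n and R=R, folded \<tau>_def g]
    show ?thesis unfolding balance ..
  qed
  also have "\<dots> = 3/2 * 2 powr (- gamma_obj R pu W b b' * real n)" by simp
  finally show ?thesis .
qed

section \<open>Positivity of the exponent above the mutual information\<close>

lemma sum_joint: "(\<Sum>u\<in>UNIV. \<Sum>v\<in>UNIV. joint pu W u v) = 1"
  for pu :: "'u::finite pmf" and W :: "'u \<Rightarrow> 'v::finite pmf"
  unfolding joint_def by (simp add: sum_distrib_left[symmetric] sum_pmf_eq_1)

lemma Zval_nonneg: "Zval R pu W u v \<ge> 0"
  unfolding Zval_def joint_def by simp

lemma Zval_zero_iff: "Zval R pu W u v = 0 \<longleftrightarrow> joint pu W u v = 0"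
  for pu :: "'u::finite pmf"
proof -
  have "joint pu W u v \<noteq> 0 \<Longrightarrow> pmf (outdist pu W) v \<noteq> 0"
    using joint_le_outdist[of pu u W v] unfolding joint_def
    by (metis mult_nonneg_nonneg order.antisym pmf_nonneg)
  thus ?thesis unfolding Zval_def by (auto simp: joint_def)
qed

(* E Z^0 = 1, as Z vanishes exactly where the joint pmf does. *)
lemma Z_moment_zero: "Z_moment R pu W 0 = 1"
  for pu :: "'u::finite pmf" and W :: "'u \<Rightarrow> 'v::finite pmf"
proof -
  have t: "joint pu W u v * Zval R pu W u v powr 0 = joint pu W u v" for u v
    using Zval_zero_iff[of R pu W u v] by auto
  show ?thesis unfolding Z_moment_def by (simp only: t sum_joint)
qed

(* Single-letter contribution to the derivative of E Z^b at 0: Phi(u,v) ln Z(u,v),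
   i.e. ln 2 times the information density term minus R Phi(u,v). *)
lemma joint_mult_ln_Zval:
  fixes pu :: "'u::finite pmf"
  assumes jp: "joint pu W u v > 0"
  shows "joint pu W u v * ln (Zval R pu W u v) = ln 2 *
     (joint pu W u v * log 2 (joint pu W u v / (pmf pu u * pmf (outdist pu W) v)) - R * joint pu W u v)"
proof -
  have qp: "pmf (outdist pu W) v > 0" using joint_le_outdist[of pu u W v] jp unfolding joint_def by linarith
  have pp: "pmf pu u > 0" using jp unfolding joint_def by (simp add: less_le zero_less_mult_iff)
  have ratio: "joint pu W u v / (pmf pu u * pmf (outdist pu W) v) > 0" using jp qp pp by simp
  have "ln (Zval R pu W u v) = ln (2 powr (-R)) + ln (joint pu W u v / (pmf pu u * pmf (outdist pu W) v))"
    unfolding Zval_def by (subst ln_mult_pos[symmetric]) (use ratio in \<open>simp_all add: mult.assoc\<close>)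
  hence lnZ: "ln (Zval R pu W u v) = ln (joint pu W u v / (pmf pu u * pmf (outdist pu W) v)) - R * ln 2"
    by (simp add: ln_powr)
  have l: "ln 2 * log 2 (joint pu W u v / (pmf pu u * pmf (outdist pu W) v))
      = ln (joint pu W u v / (pmf pu u * pmf (outdist pu W) v))"
    by (simp add: log_def)
  show ?thesis unfolding lnZ l[symmetric] by (simp add: algebra_simps)
qed

lemma Z_moment_derivative_at_0:
  fixes pu :: "'u::finite pmf" and W :: "'u \<Rightarrow> 'v::finite pmf"
  shows "((\<lambda>b. Z_moment R pu W b) has_field_derivative ln 2 * (mutual_info pu W - R)) (at 0)"
proof -
  define d where "d = (\<lambda>u v. joint pu W u v * (if Zval R pu W u v = 0 then 0 else ln (Zval R pu W u v)))"
  have der1: "((\<lambda>b. joint pu W u v * Zval R pu W u v powr b) has_field_derivative d u v) (at 0)" for u v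
  proof (cases "Zval R pu W u v = 0")
    case False
    hence "Zval R pu W u v > 0" using Zval_nonneg[of R pu W u v] by linarith
    thus ?thesis using False unfolding d_def by (auto intro!: derivative_eq_intros)
  qed (simp add: d_def)
  have dval: "d u v = ln 2 * (joint pu W u v * log 2 (joint pu W u v / (pmf pu u * pmf (outdist pu W) v))
      - R * joint pu W u v)" for u v
  proof (cases "joint pu W u v = 0")
    case False
    hence "joint pu W u v > 0" unfolding joint_def by (simp add: less_le)
    thus ?thesis using False Zval_zero_iff[of R pu W u v] joint_mult_ln_Zval unfolding d_def by simp
  qed (simp add: d_def)
  have "(\<Sum>u\<in>UNIV. \<Sum>v\<in>UNIV. d u v) = ln 2 * (mutual_info pu W - R)"
    unfolding dval mutual_info_def sum_distrib_left[symmetric] sum_subtractf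
    by (simp add: sum_distrib_left[symmetric] sum_joint right_diff_distrib)
  moreover have "((\<lambda>b. Z_moment R pu W b) has_field_derivative (\<Sum>u\<in>UNIV. \<Sum>v\<in>UNIV. d u v)) (at 0)"
    unfolding Z_moment_def by (intro DERIV_sum der1)
  ultimately show ?thesis by simp
qed

lemma exists_Z_moment_lt_1:
  fixes pu :: "'u::finite pmf" and W :: "'u \<Rightarrow> 'v::finite pmf"
  assumes R: "R > mutual_info pu W"
  shows "\<exists>b>0. Z_moment R pu W b < 1"
proof -
  have "ln 2 * (mutual_info pu W - R) < 0" using R by (simp add: mult_pos_neg)
  then obtain e where e: "e > 0" "\<And>h. h > 0 \<Longrightarrow> h < e \<Longrightarrow> Z_moment R pu W 0 > Z_moment R pu W (0 + h)"
    using DERIV_neg_dec_right[OF Z_moment_derivative_at_0] by blast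
  have "Z_moment R pu W (e/2) < 1" using e(2)[of "e/2"] e(1) Z_moment_zero[of R pu W] by simp
  thus ?thesis using e(1) by (intro exI[of _ "e/2"]) auto
qed

(* At b' = 1 the conditional moment is E_V sqrt(sum_u Phi(u|v)) <= 1. *)
lemma Z_cond_moment_one_le: "Z_cond_moment R pu W 1 \<le> 1"
  for pu :: "'u::finite pmf" and W :: "'u \<Rightarrow> 'v::finite pmf"
proof -
  have cond_sum: "(\<Sum>u\<in>UNIV. cond pu W u v) \<le> 1" for v
  proof (cases "pmf (outdist pu W) v = 0")
    case False
    hence "(\<Sum>u\<in>UNIV. cond pu W u v) = 1"
      unfolding cond_def joint_def by (simp add: sum_divide_distrib[symmetric] pmf_outdist_sum[symmetric])
    thus ?thesis by simp
  qed (simp add: cond_def)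
  have "Z_cond_moment R pu W 1 \<le> (\<Sum>v\<in>UNIV. pmf (outdist pu W) v * 1)"
    unfolding Z_cond_moment_def
  proof (intro sum_mono mult_left_mono)
    fix v
    have "(\<Sum>u\<in>UNIV. cond pu W u v * Zval R pu W u v powr (1 - 1)) \<le> (\<Sum>u\<in>UNIV. cond pu W u v)"
      by (intro sum_mono) (auto simp: cond_def joint_def)
    thus "sqrt (\<Sum>u\<in>UNIV. cond pu W u v * Zval R pu W u v powr (1 - 1)) \<le> 1"
      using cond_sum[of v] by simp
  qed simp
  thus ?thesis by (simp add: sum_pmf_eq_1)
qed

lemma positive_exponent:
  fixes pu :: "'u::finite pmf" and W :: "'u \<Rightarrow> 'v::finite pmf"
  assumes R: "R > mutual_info pu W"
  shows "\<exists>b>0. gamma_obj R pu W b 1 > 0"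
proof -
  obtain b where b: "b > 0" and A1: "Z_moment R pu W b < 1"
    using exists_Z_moment_lt_1[OF R] by blast
  have "log 2 (Z_moment R pu W b) < 0" using Z_moment_pos[of R pu W b] A1 by simp
  moreover have "log 2 (Z_cond_moment R pu W 1) \<le> 0"
    using Z_cond_moment_pos[of R pu W 1] Z_cond_moment_one_le[of R pu W] by simp
  hence "2 * b * log 2 (Z_cond_moment R pu W 1) \<le> 0" using b by (simp add: mult_nonneg_nonpos)
  ultimately have "gamma_obj R pu W b 1 > 0"
    unfolding gamma_obj_eq using b by (intro divide_pos_pos) auto
  thus ?thesis using b by blast
qed

lemma exp_tv_nonneg: "exp_tv R pu W n \<ge> 0"
  unfolding exp_tv_def tv_seq_def by (intro integral_nonneg_AE AE_pmfI mult_nonneg_nonneg sum_nonneg) auto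


theorem mainTheorem3:
  fixes pu :: "'u::finite pmf" and W :: "'u \<Rightarrow> 'v::finite pmf" and R :: real
  assumes "R > mutual_info pu W"
  shows "((\<lambda>n. exp_tv R pu W n) \<longlonglongrightarrow> 0) \<and>
         (\<forall>n b b'. b \<ge> 0 \<and> b' \<ge> 0 \<and> (b, b') \<noteq> (0, 0) \<longrightarrow>
            exp_tv R pu W n \<le> 3/2 * 2 powr (- gamma_obj R pu W b b' * real n))"
proof
  show bound: "\<forall>n b b'. b \<ge> 0 \<and> b' \<ge> 0 \<and> (b, b') \<noteq> (0, 0) \<longrightarrow>
      exp_tv R pu W n \<le> 3/2 * 2 powr (- gamma_obj R pu W b b' * real n)"
    using exp_tv_exponential_bound by blast
  obtain b where b: "b > 0" and g: "gamma_obj R pu W b 1 > 0"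
    using positive_exponent[OF assms] by blast
  define g where "g = gamma_obj R pu W b 1"
  have "2 powr (- g) < 1" using g powr_less_mono[of "- g" 0 "2::real"] by (simp add: g_def)
  hence "(\<lambda>n. 3/2 * (2 powr (- g)) ^ n) \<longlonglongrightarrow> 0"
    by (intro tendsto_mult_right_zero LIMSEQ_realpow_zero) auto
  hence lim: "(\<lambda>n. 3/2 * 2 powr (- g * real n)) \<longlonglongrightarrow> 0"
    by (simp add: pow_powr2 mult.commute)
  show "(\<lambda>n. exp_tv R pu W n) \<longlonglongrightarrow> 0"
  proof (rule tendsto_sandwich[OF _ _ tendsto_const lim])
    show "\<forall>\<^sub>F n in sequentially. 0 \<le> exp_tv R pu W n" by (simp add: exp_tv_nonneg)
    show "\<forall>\<^sub>F n in sequentially. exp_tv R pu W n \<le> 3/2 * 2 powr (- g * real n)"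
      using bound b unfolding g_def by (intro always_eventually allI) auto
  qed
qed

end
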